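(* Let $G(\circ)$, $G(\ast)$ be groups on a set $G$ of size $n$ and let $a\in G$ with $\sigma=|a|_\circ>|a|_\ast=\tau$. Then $\mathrm{dist}_a\ge (n/\sigma)\lceil\sigma/\tau\rceil\ge n/\tau$.
   Context: $|a|_\circ$ denotes the order of $a$ in $G(\circ)$, $|a|_\ast$ its order in $G(\ast)$. $\mathrm{dist}_a=|\{b\in G: a\circ b\ne a\ast b\}|$. *)

theory Defs
  imports "HOL-Algebra.Multiplicative_Group" Complex_Main
begin

definition dist_elem :: "('a, 'b) monoid_scheme \<Rightarrow> ('a, 'c) monoid_scheme \<Rightarrow> 'a \<Rightarrow> nat" where
  "dist_elem G H a = card {b \<in> carrier G. a \<otimes>\<^bsub>G\<^esub> b \<noteq> a \<otimes>\<^bsub>H\<^esub> b}"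

end

theory Submission
  imports Defs
begin

text \<open>Let \<open>D\<close> be the set of \<open>b\<close> with \<open>a \<circ> b \<noteq> a \<ast> b\<close>. Along the sequence \<open>b, a b, a\<^sup>2 b, \<dots>\<close>
  (powers and products taken in \<open>G(\<circ>)\<close>), which is \<open>\<sigma>\<close>-periodic, every \<open>\<tau>\<close> consecutive
  terms contain an element of \<open>D\<close>: otherwise \<open>a\<close> would act on them alike in both groups,
  giving \<open>a\<^sup>\<tau> = 1\<close> in \<open>G(\<circ>)\<close>. Hence each period contains at least \<open>\<lceil>\<sigma>/\<tau>\<rceil>\<close> elements of \<open>D\<close>;
  summing over all \<open>n\<close> starting points \<open>b\<close> counts every element of \<open>D\<close> exactly \<open>\<sigma>\<close> times.\<close>

lemma card_Int_lessThan_add: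
  fixes S :: "nat set"
  shows "card (S \<inter> {..<m + k}) = card (S \<inter> {..<m}) + card (S \<inter> {m..<m + k})"
proof -
  have "S \<inter> {..<m + k} = (S \<inter> {..<m}) \<union> (S \<inter> {m..<m + k})" by auto
  then show ?thesis by (simp add: card_Un_disjoint disjoint_iff)
qed

lemma card_Int_lessThan_ge_if_windows:
  fixes S :: "nat set"
  assumes windows: "\<And>m. \<exists>j<w. m + j \<in> S"
  shows "k \<le> card (S \<inter> {..<w * k})"
proof (induction k)
  case 0
  then show ?case by simp
next
  case (Suc k)
  obtain j where "j < w" "w * k + j \<in> S" using windows by blast
  then have "S \<inter> {w * k..<w * k + w} \<noteq> {}" by auto
  then have "1 \<le> card (S \<inter> {w * k..<w * k + w})"
    by (simp add: Suc_le_eq card_gt_0_iff)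
  with Suc.IH show ?case
    using card_Int_lessThan_add[of S "w * k" w] by (simp add: add.commute)
qed

lemma card_Int_lessThan_periodic:
  fixes S :: "nat set"
  assumes periodic: "\<And>j. j + p \<in> S \<longleftrightarrow> j \<in> S"
  shows "card (S \<inter> {..<p * t}) = t * card (S \<inter> {..<p})"
proof (induction t)
  case 0
  then show ?case by simp
next
  case (Suc t)
  have "S \<inter> {p..<p + p * t} = (\<lambda>j. j + p) ` (S \<inter> {..<p * t})"
  proof (intro equalityI subsetI)
    fix i assume "i \<in> S \<inter> {p..<p + p * t}"
    then show "i \<in> (\<lambda>j. j + p) ` (S \<inter> {..<p * t})"
      using periodic[of "i - p"] by (intro image_eqI[of _ _ "i - p"]) auto
  qed (use periodic in auto)
  then have "card (S \<inter> {p..<p + p * t}) = card (S \<inter> {..<p * t})"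
    by (simp add: card_image)
  with Suc.IH show ?case
    using card_Int_lessThan_add[of S p "p * t"] by simp
qed

lemma periodic_set_meeting_windows_card:
  fixes S :: "nat set"
  assumes "\<And>j. j + p \<in> S \<longleftrightarrow> j \<in> S" and "\<And>m. \<exists>j<w. m + j \<in> S"
  shows "p \<le> w * card (S \<inter> {..<p})"
  using card_Int_lessThan_ge_if_windows[of w S p] card_Int_lessThan_periodic[of p S w] assms
  by (simp add: mult.commute)

lemma (in group) card_mult_preimage:
  assumes "g \<in> carrier G" and "D \<subseteq> carrier G"
  shows "card {b \<in> carrier G. g \<otimes> b \<in> D} = card D"
proof -
  have "{b \<in> carrier G. g \<otimes> b \<in> D} = (\<lambda>d. inv g \<otimes> d) ` D"
  proof (intro equalityI subsetI)
    fix b assume "b \<in> {b \<in> carrier G. g \<otimes> b \<in> D}"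
    then show "b \<in> (\<lambda>d. inv g \<otimes> d) ` D"
      using assms(1) by (intro image_eqI[of _ _ "g \<otimes> b"]) (auto simp: inv_solve_left)
  qed (use assms in \<open>auto simp: m_assoc[symmetric]\<close>)
  moreover have "inj_on (\<lambda>d. inv g \<otimes> d) D"
    using inj_on_cmult[OF inv_closed[OF assms(1)]] assms(2) by (rule inj_on_subset)
  ultimately show ?thesis by (simp add: card_image)
qed

lemma (in group) sum_card_pow_mult_in:
  assumes "finite (carrier G)" and "a \<in> carrier G" and "D \<subseteq> carrier G"
  shows "(\<Sum>b\<in>carrier G. card {j \<in> {..<N}. a [^] j \<otimes> b \<in> D}) = N * card D"
proof -
  have "(\<Sum>b\<in>carrier G. card {j \<in> {..<N}. a [^] j \<otimes> b \<in> D})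
      = (\<Sum>b\<in>carrier G. \<Sum>j<N. if a [^] j \<otimes> b \<in> D then 1 else 0)"
    by (simp add: sum.inter_filter[symmetric])
  also have "\<dots> = (\<Sum>j<N. \<Sum>b\<in>carrier G. if a [^] j \<otimes> b \<in> D then 1 else 0)"
    by (rule sum.swap)
  also have "\<dots> = (\<Sum>j<N. card {b \<in> carrier G. a [^] j \<otimes> b \<in> D})"
    using assms(1) by (simp add: sum.inter_filter[symmetric])
  also have "\<dots> = N * card D"
    using assms(2,3) by (simp add: card_mult_preimage)
  finally show ?thesis .
qed

definition disagreement :: "('a, 'b) monoid_scheme \<Rightarrow> ('a, 'c) monoid_scheme \<Rightarrow> 'a \<Rightarrow> 'a set" where
  "disagreement G H a = {b \<in> carrier G. a \<otimes>\<^bsub>G\<^esub> b \<noteq> a \<otimes>\<^bsub>H\<^esub> b}"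

lemma dist_elem_eq_card_disagreement: "dist_elem G H a = card (disagreement G H a)"
  by (simp add: dist_elem_def disagreement_def)

locale two_groups = G: group G + H: group H
  for G :: "('a, 'b) monoid_scheme" and H :: "('a, 'c) monoid_scheme" +
  assumes carrier_eq: "carrier H = carrier G"
begin

lemma pow_mult_eq_if_agree:
  fixes n :: nat
  assumes a: "a \<in> carrier G" and c: "c \<in> carrier G"
    and agree: "\<And>j. j < n \<Longrightarrow> a [^]\<^bsub>G\<^esub> j \<otimes>\<^bsub>G\<^esub> c \<notin> disagreement G H a"
  shows "a [^]\<^bsub>G\<^esub> n \<otimes>\<^bsub>G\<^esub> c = a [^]\<^bsub>H\<^esub> n \<otimes>\<^bsub>H\<^esub> c"
  using agree
proof (induction n)
  case 0
  then show ?case using c carrier_eq by simp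
next
  case (Suc n)
  have aH: "a \<in> carrier H" and cH: "c \<in> carrier H" using a c carrier_eq by auto
  have "a [^]\<^bsub>G\<^esub> Suc n \<otimes>\<^bsub>G\<^esub> c = a \<otimes>\<^bsub>G\<^esub> (a [^]\<^bsub>G\<^esub> n \<otimes>\<^bsub>G\<^esub> c)"
    using a c by (simp only: G.nat_pow_Suc2 G.m_assoc G.nat_pow_closed)
  also have "\<dots> = a \<otimes>\<^bsub>H\<^esub> (a [^]\<^bsub>G\<^esub> n \<otimes>\<^bsub>G\<^esub> c)"
    using Suc.prems[of n] a c by (simp add: disagreement_def)
  also have "\<dots> = a \<otimes>\<^bsub>H\<^esub> (a [^]\<^bsub>H\<^esub> n \<otimes>\<^bsub>H\<^esub> c)"
    using Suc by simp
  also have "\<dots> = a [^]\<^bsub>H\<^esub> Suc n \<otimes>\<^bsub>H\<^esub> c"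
    using aH cH by (simp only: H.nat_pow_Suc2 H.m_assoc H.nat_pow_closed)
  finally show ?case .
qed

text \<open>Otherwise \<open>a\<close> would act on \<open>c\<close> alike in both groups for \<open>ord\<^sub>H a\<close> steps, forcing
  \<open>a [^]\<^bsub>G\<^esub> ord\<^sub>H a = \<one>\<^bsub>G\<^esub>\<close>, i.e.\ \<open>ord\<^sub>G a dvd ord\<^sub>H a\<close>.\<close>
lemma exists_pow_mult_in_disagreement:
  assumes a: "a \<in> carrier G" and c: "c \<in> carrier G"
    and ord_pos: "0 < H.ord a" and ord_less: "H.ord a < G.ord a"
  shows "\<exists>j < H.ord a. a [^]\<^bsub>G\<^esub> j \<otimes>\<^bsub>G\<^esub> c \<in> disagreement G H a"
proof (rule ccontr)
  assume "\<not> ?thesis"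
  then have "a [^]\<^bsub>G\<^esub> H.ord a \<otimes>\<^bsub>G\<^esub> c = a [^]\<^bsub>H\<^esub> H.ord a \<otimes>\<^bsub>H\<^esub> c"
    using pow_mult_eq_if_agree[OF a c] by blast
  also have "\<dots> = c" using a c carrier_eq by simp
  finally have "a [^]\<^bsub>G\<^esub> H.ord a = \<one>\<^bsub>G\<^esub>" using a c by simp
  then have "G.ord a dvd H.ord a" using a G.pow_eq_id by blast
  with ord_pos ord_less show False by (simp add: nat_dvd_not_less)
qed

lemma card_mult_ceiling_le_ord_mult_card_disagreement:
  assumes fin: "finite (carrier G)" and a: "a \<in> carrier G"
    and ord_less: "H.ord a < G.ord a"
  shows "int (card (carrier G)) * \<lceil>real (G.ord a) / real (H.ord a)\<rceil>
    \<le> int (G.ord a * card (disagreement G H a))"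
proof -
  define \<sigma> \<tau> D where "\<sigma> = G.ord a" and "\<tau> = H.ord a" and "D = disagreement G H a"
  define S where "S b = {j::nat. a [^]\<^bsub>G\<^esub> j \<otimes>\<^bsub>G\<^esub> b \<in> D}" for b
  have \<tau>_pos: "0 < \<tau>"
    using H.ord_ge_1[of a] fin a carrier_eq unfolding \<tau>_def by simp
  have per_coset: "\<lceil>real \<sigma> / real \<tau>\<rceil> \<le> int (card (S b \<inter> {..<\<sigma>}))" if b: "b \<in> carrier G" for b
  proof -
    have "\<sigma> \<le> \<tau> * card (S b \<inter> {..<\<sigma>})"
    proof (rule periodic_set_meeting_windows_card)
      show "j + \<sigma> \<in> S b \<longleftrightarrow> j \<in> S b" for j
        using a unfolding S_def \<sigma>_def by (simp add: G.nat_pow_mult[symmetric])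
      show "\<exists>j<\<tau>. m + j \<in> S b" for m
        using exists_pow_mult_in_disagreement[OF a _ \<tau>_pos[unfolded \<tau>_def] ord_less,
            of "a [^]\<^bsub>G\<^esub> m \<otimes>\<^bsub>G\<^esub> b"] a b
        unfolding S_def D_def \<tau>_def by (simp add: G.m_assoc[symmetric] G.nat_pow_mult add.commute)
    qed
    then have "real \<sigma> / real \<tau> \<le> real (card (S b \<inter> {..<\<sigma>}))"
      using \<tau>_pos by (simp add: field_simps flip: of_nat_mult)
    then show ?thesis by (simp add: ceiling_le_iff)
  qed
  have "int (card (carrier G)) * \<lceil>real \<sigma> / real \<tau>\<rceil> \<le> (\<Sum>b\<in>carrier G. int (card (S b \<inter> {..<\<sigma>})))"
    using sum_mono[of "carrier G" "\<lambda>_. \<lceil>real \<sigma> / real \<tau>\<rceil>", OF per_coset] by (simp add: mult.commute)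
  also have "\<dots> = int (\<sigma> * card D)"
    using G.sum_card_pow_mult_in[OF fin a, of D \<sigma>]
    unfolding S_def D_def disagreement_def by (simp add: Int_def conj_commute flip: of_nat_sum)
  finally show ?thesis unfolding \<sigma>_def \<tau>_def D_def .
qed

end

theorem lemma4p11:
  fixes G H :: "'a monoid" and a :: 'a
  assumes "group G" and "group H"
    and "carrier H = carrier G"
    and "finite (carrier G)"
    and "a \<in> carrier G"
    and "group.ord H a < group.ord G a"
  shows "real (card (carrier G)) / real (group.ord G a) * real_of_int \<lceil>real (group.ord G a) / real (group.ord H a)\<rceil>
           \<le> real (dist_elem G H a) \<and>
         real (card (carrier G)) / real (group.ord H a)
           \<le> real (card (carrier G)) / real (group.ord G a) * real_of_int \<lceil>real (group.ord G a) / real (group.ord H a)\<rceil>"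
proof -
  interpret two_groups G H
    using assms(1-3) by (simp add: two_groups_def two_groups_axioms_def)
  define n \<sigma> \<tau> k where "n = card (carrier G)" and "\<sigma> = G.ord a" and "\<tau> = H.ord a"
    and "k = \<lceil>real \<sigma> / real \<tau>\<rceil>"
  have \<sigma>_pos: "0 < real \<sigma>" using assms(6) unfolding \<sigma>_def by simp
  have "real n * real_of_int k \<le> real \<sigma> * real (dist_elem G H a)"
    using card_mult_ceiling_le_ord_mult_card_disagreement[OF assms(4-6)]
    unfolding n_def \<sigma>_def \<tau>_def k_def dist_elem_eq_card_disagreement
    by (metis of_int_le_iff of_int_mult of_int_of_nat_eq of_nat_mult)
  then have "real n / real \<sigma> * real_of_int k \<le> real (dist_elem G H a)"
    using \<sigma>_pos by (simp add: field_simps)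
  moreover have "real n / real \<sigma> * (real \<sigma> / real \<tau>) \<le> real n / real \<sigma> * real_of_int k"
    unfolding k_def by (intro mult_left_mono) auto
  ultimately show ?thesis
    using \<sigma>_pos unfolding n_def \<sigma>_def \<tau>_def k_def by simp
qed

end
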